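(* Let $(u,\mu)$ be a weak conservative solution of the Hunter--Saxton equation, $T>0$, $F(t,x)=\mu(t,(-\infty,x))$, and let $D>0$ be such that $|u(t,x)-u(s,y)|\le D(|t-s|+|x-y|)^{1/2}$ for all $(t,x),(s,y)\in[0,T]\times\mathbb{R}$. Then there is a constant $M>0$, depending only on $D$, $T$ and $\|u(0,\cdot)\|_{L^\infty}$, such that for every solution $x(\cdot)$ of $\dot x(t)=u(t,x(t))$ on $[0,T]$, $$F(0,x(0)+)\le F\big(t,\,x(0)+u(0,x(0))t+Mt^{3/2}+\big)\qquad\text{for all }t\in[0,T],$$ where $F(t,z+)=\lim_{w\downarrow z}F(t,w)$.
   Context: The Hunter--Saxton equation is $u_t+uu_x=\tfrac14\big(\int_{-\infty}^x d\mu(t,z)-\int_x^{\infty}d\mu(t,z)\big)$, $\mu_t+(u\mu)_x=0$. Fix $\psi^\pm\in C^\infty(\mathbb{R})$ with $\psi^++\psi^-\equiv1$, $0\le\psi^\pm\le1$, $\operatorname{supp}\psi^-\subset(-\infty,1)$, $\operatorname{supp}\psi^+\subset(-1,\infty)$. $E_1=\{\bar f+a\psi^+:\bar f\in H^1,a\in\mathbb{R}\}$, $E_2=\{\bar f+a\psi^++b\psi^-:\bar f\in H^1,a,b\in\mathbb{R}\}$; $E_1^0,E_2^0$ analogously with $\bar f\in L^2$, normed by $(\|\bar f\|_{L^2}^2+a^2)^{1/2}$ resp. $(\|\bar f\|_{L^2}^2+a^2+b^2)^{1/2}$. $\mathcal{D}$: pairs $(u,\mu)$, $u\in E_2$, $\mu$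 positive finite Radon measure, $\mu((-\infty,\cdot))\in E_1^0$, $d\mu_{\rm ac}=u_x^2dx$. A weak conservative solution with initial data in $\mathcal{D}$ is a pair $(u,\mu)$ with: (i) $u(t,\cdot)\in E_2$; (ii) $\mu(t,(-\infty,\cdot))\in E_1^0$, $d\mu_{\rm ac}(t)=u_x^2(t,\cdot)dx$; (iii) for all $\phi\in C_c^\infty([0,\infty)\times\mathbb{R})$: $\int_0^\infty\!\int[u\phi_t+\tfrac12u^2\phi_x+\tfrac14(\int_{-\infty}^xd\mu(t)-\int_x^\infty d\mu(t))\phi]dxdt=-\int u\phi|_{t=0}dx$ and $\int_0^\infty\!\int(\phi_t+u\phi_x)d\mu(t)dt=-\int\phi|_{t=0}d\mu(0)$; (iv) for every $T>0$, $u$ Hölder continuous on $[0,T]\times\mathbb{R}$ and $t\mapsto u(t,\cdot)$ Lipschitz $[0,T]\to E_2^0$; (v) for a.e. $t$, $\mu(t)$ absolutely continuous with density $u_x^2(t,\cdot)$; (vi) $t\mapsto\mu(t)$ weakly continuous. *)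

theory Defs
  imports "HOL-Analysis.Analysis"
begin

definition smooth1 :: "(real \<Rightarrow> real) \<Rightarrow> bool" where
  "smooth1 f \<longleftrightarrow> (\<forall>n x. ((deriv ^^ n) f has_real_derivative (deriv ^^ Suc n) f x) (at x))"

definition smooth2 :: "(real \<times> real \<Rightarrow> real) \<Rightarrow> bool" where
  "smooth2 f \<longleftrightarrow> (\<exists>Dp :: nat \<Rightarrow> nat \<Rightarrow> real \<times> real \<Rightarrow> real. Dp 0 0 = f \<and>
     (\<forall>i j. continuous_on UNIV (Dp i j)) \<and>
     (\<forall>i j t x. ((\<lambda>s. Dp i j (s, x)) has_real_derivative Dp (Suc i) j (t, x)) (at t) \<and>
                ((\<lambda>y. Dp i j (t, y)) has_real_derivative Dp i (Suc j) (t, x)) (at x)))"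

(* test functions C_c^infinity([0,oo) x R): restrictions of compactly supported smooth functions *)
definition test_fun :: "(real \<times> real \<Rightarrow> real) \<Rightarrow> bool" where
  "test_fun phi \<longleftrightarrow> smooth2 phi \<and> compact (closure {z. phi z \<noteq> 0})"

definition d_t :: "(real \<times> real \<Rightarrow> real) \<Rightarrow> real \<Rightarrow> real \<Rightarrow> real" where
  "d_t phi t x = deriv (\<lambda>s. phi (s, x)) t"

definition d_x :: "(real \<times> real \<Rightarrow> real) \<Rightarrow> real \<Rightarrow> real \<Rightarrow> real" where
  "d_x phi t x = deriv (\<lambda>y. phi (t, y)) x"

(* the cut-off function psi^+ ; psi^- = 1 - psi^+ *)
definition cutoff :: "(real \<Rightarrow> real) \<Rightarrow> bool" where
  "cutoff psi \<longleftrightarrow> smooth1 psi \<and> (\<forall>x. 0 \<le> psi x \<and> psi x \<le> 1) \<and>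
     closure {x. 1 - psi x \<noteq> 0} \<subseteq> {..<1} \<and> closure {x. psi x \<noteq> 0} \<subseteq> {-1<..}"

definition L2 :: "(real \<Rightarrow> real) \<Rightarrow> bool" where
  "L2 f \<longleftrightarrow> f \<in> borel_measurable lborel \<and> integrable lborel (\<lambda>x. (f x)^2)"

(* H^1, via the (absolutely) continuous representative *)
definition H1 :: "(real \<Rightarrow> real) \<Rightarrow> bool" where
  "H1 f \<longleftrightarrow> L2 f \<and> (\<exists>g. L2 g \<and> (\<forall>x y. x \<le> y \<longrightarrow>
      set_integrable lborel {x..y} g \<and> f y - f x = (LINT s:{x..y}|lborel. g s)))"

definition E2 :: "(real \<Rightarrow> real) \<Rightarrow> (real \<Rightarrow> real) \<Rightarrow> bool" where
  "E2 psi f \<longleftrightarrow> (\<exists>fb a b. H1 fb \<and> (\<forall>x. f x = fb x + a * psi x + b * (1 - psi x)))"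

definition E1_0 :: "(real \<Rightarrow> real) \<Rightarrow> (real \<Rightarrow> real) \<Rightarrow> bool" where
  "E1_0 psi F \<longleftrightarrow> (\<exists>a. L2 (\<lambda>x. F x - a * psi x))"

definition Fmu :: "(real \<Rightarrow> real measure) \<Rightarrow> real \<Rightarrow> real \<Rightarrow> real" where
  "Fmu mu t x = measure (mu t) {..<x}"

definition Fplus :: "(real \<Rightarrow> real measure) \<Rightarrow> real \<Rightarrow> real \<Rightarrow> real" where
  "Fplus mu t z = Lim (at_right z) (\<lambda>w. Fmu mu t w)"

(* weak conservative solution of Hunter-Saxton, items (i)-(vi); ux t is the x-derivative of u t *)
definition HS_weak_cons_sol ::
  "(real \<Rightarrow> real) \<Rightarrow> (real \<Rightarrow> real \<Rightarrow> real) \<Rightarrow> (real \<Rightarrow> real measure) \<Rightarrow> bool" where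
  "HS_weak_cons_sol psi u mu \<longleftrightarrow>
   (\<exists>ux :: real \<Rightarrow> real \<Rightarrow> real.
     (\<forall>t\<ge>0. sets (mu t) = sets borel \<and> finite_measure (mu t)) \<and>
     (\<forall>t\<ge>0. \<forall>x y. x \<le> y \<longrightarrow> set_integrable lborel {x..y} (ux t) \<and>
                 u t y - u t x = (LINT s:{x..y}|lborel. ux t s)) \<and>
     \<comment> \<open>(i)\<close>
     (\<forall>t\<ge>0. E2 psi (u t)) \<and>
     \<comment> \<open>(ii)\<close>
     (\<forall>t\<ge>0. E1_0 psi (Fmu mu t) \<and>
        (\<exists>N \<in> null_sets lborel. \<forall>A \<in> sets borel.
           emeasure (mu t) A = set_nn_integral lborel A (\<lambda>x. ennreal ((ux t x)^2)) + emeasure (mu t) (A \<inter> N))) \<and>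
     \<comment> \<open>(iii)\<close>
     (\<forall>phi. test_fun phi \<longrightarrow>
        (LINT t:{0..}|lborel. LINT x|lborel.
            u t x * d_t phi t x + (u t x)^2 / 2 * d_x phi t x
            + 1/4 * (measure (mu t) {..<x} - measure (mu t) {x<..}) * phi (t, x))
          = - (LINT x|lborel. u 0 x * phi (0, x)) \<and>
        (LINT t:{0..}|lborel. LINT x|mu t. d_t phi t x + u t x * d_x phi t x)
          = - (LINT x|mu 0. phi (0, x))) \<and>
     \<comment> \<open>(iv)\<close>
     (\<forall>T>0. (\<exists>\<alpha> C. 0 < \<alpha> \<and> \<alpha> \<le> 1 \<and> (\<forall>t\<in>{0..T}. \<forall>s\<in>{0..T}. \<forall>x y.
                 \<bar>u t x - u s y\<bar> \<le> C * dist (t, x) (s, y) powr \<alpha>)) \<and>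
            (\<exists>L. \<forall>t\<in>{0..T}. \<forall>s\<in>{0..T}. \<exists>fb a b. L2 fb \<and>
                 (\<forall>x. u t x - u s x = fb x + a * psi x + b * (1 - psi x)) \<and>
                 sqrt ((LINT x|lborel. (fb x)^2) + a^2 + b^2) \<le> L * \<bar>t - s\<bar>)) \<and>
     \<comment> \<open>(v)\<close>
     (AE t in lborel. t \<ge> 0 \<longrightarrow>
        (\<forall>A \<in> sets borel. emeasure (mu t) A = set_nn_integral lborel A (\<lambda>x. ennreal ((ux t x)^2)))) \<and>
     \<comment> \<open>(vi) weak (vague) continuity\<close>
     (\<forall>f. continuous_on UNIV f \<and> compact (closure {x. f x \<noteq> (0::real)}) \<longrightarrow>
        continuous_on {0..} (\<lambda>t. LINT x|mu t. f x)))"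

end

theory Submission
  imports Defs
begin

text \<open>Mass cannot overtake a barrier that moves faster than the flow. Testing the weak form of
  \<open>\<mu>\<^sub>t + (u \<mu>)\<^sub>x = 0\<close> with a smooth window whose left edge moves slower than \<open>u\<close> and whose
  right edge is a curve \<open>y\<close> with \<open>y' \<ge> u\<close> near it shows that the initial mass in the window is
  bounded by the mass left of \<open>y(t)\<close> at time \<open>t\<close>. By the Hoelder bound
  \<open>|u(t,x) - u(0,x\<^sub>0)| \<le> D (t + |x - x\<^sub>0|)\<^sup>1\<^sup>/\<^sup>2\<close>, a curve starting at \<open>x\<^sub>0 + \<delta>\<close> with speed
  \<open>u(0,x\<^sub>0) + D (2\<delta>)\<^sup>1\<^sup>/\<^sup>2 + A t\<^sup>1\<^sup>/\<^sup>2\<close> is such a barrier for a suitable \<open>A = A(D,T,sup |u(0,.)|)\<close>;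
  at time \<open>t\<close> it has advanced by at most \<open>(u(0,x\<^sub>0) + D (2\<delta>)\<^sup>1\<^sup>/\<^sup>2) t + 3/4 A t\<^sup>3\<^sup>/\<^sup>2\<close>, and
  \<open>\<delta> \<rightarrow> 0\<close> gives the estimate.\<close>

lemma Fplus_tendsto:
  assumes "sets (mu t) = sets borel" "finite_measure (mu t)"
  shows "((\<lambda>w. Fmu mu t w) \<longlongrightarrow> Fplus mu t z) (at_right z)"
proof -
  interpret finite_measure "mu t" by fact
  have "((\<lambda>w. Fmu mu t w) \<longlongrightarrow> Inf ((\<lambda>w. Fmu mu t w) ` ({z<..} \<inter> UNIV))) (at z within ({z<..} \<inter> UNIV))"
    by (rule Lim_right_bound[where K=0]) (auto simp: Fmu_def assms intro!: finite_measure_mono)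
  then have "((\<lambda>w. Fmu mu t w) \<longlongrightarrow> Inf ((\<lambda>w. Fmu mu t w) ` ({z<..} \<inter> UNIV))) (at_right z)" by simp
  then show ?thesis unfolding Fplus_def by (metis tendsto_Lim trivial_limit_at_right_real)
qed

lemma Fplus_le_Fmu:
  assumes "sets (mu t) = sets borel" "finite_measure (mu t)" "z < w"
  shows "Fplus mu t z \<le> Fmu mu t w"
proof (rule tendsto_upperbound[OF Fplus_tendsto[of mu t z, OF assms(1,2)]])
  interpret finite_measure "mu t" by fact
  show "\<forall>\<^sub>F x in at_right z. Fmu mu t x \<le> Fmu mu t w"
    using eventually_at_right_real[OF assms(3)]
    by eventually_elim (auto simp: Fmu_def assms intro!: finite_measure_mono)
qed simp

lemma le_Fplus:
  assumes "sets (mu t) = sets borel" "finite_measure (mu t)" "\<And>w. z < w \<Longrightarrow> A \<le> Fmu mu t w"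
  shows "A \<le> Fplus mu t z"
proof (rule tendsto_lowerbound[OF Fplus_tendsto[of mu t z, OF assms(1,2)]])
  show "\<forall>\<^sub>F x in at_right z. A \<le> Fmu mu t x"
    using eventually_at_right_less[of z] by eventually_elim (rule assms(3))
qed simp

lemma measure_lessThan_le_bound:
  assumes "finite_measure M" "sets M = sets borel" "\<And>R. measure M {-R..<w} \<le> C"
  shows "measure M {..<w :: real} \<le> C"
proof -
  interpret finite_measure M by fact
  have "(\<lambda>n. measure M {- real n..<w}) \<longlonglongrightarrow> measure M (\<Union>n. {- real n..<w})"
  proof (rule finite_Lim_measure_incseq)
    show "range (\<lambda>n. {- real n..<w}) \<subseteq> sets M" unfolding assms(2) by (simp add: image_subset_iff)
    show "incseq (\<lambda>n. {- real n..<w})" by (auto simp: incseq_def)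
  qed
  also have "(\<Union>n. {- real n..<w}) = {..<w}"
  proof (intro equalityI subsetI)
    fix x assume "x \<in> {..<w}"
    moreover obtain n where "- x \<le> real n" using real_arch_simple by blast
    ultimately show "x \<in> (\<Union>n. {- real n..<w})" by (intro UN_I[of n]) auto
  qed auto
  finally show ?thesis
    by (rule LIMSEQ_le_const2) (use assms(3) in blast)
qed

section \<open>Smooth expressions\<close>

text \<open>A deep embedding of expressions in \<open>(t, x)\<close> built from constants, sums, products and
  composition with the derivatives of \<open>smooth1\<close> functions. Formal partial derivatives \<open>sdt\<close>
  and \<open>sdx\<close> stay in the language, which yields the whole family of iterated partial derivatives
  required by \<open>smooth2\<close> at once.\<close>

datatype sexp = SConst real | STime | SSpace | SAdd sexp sexp | SMult sexp sexp
  | SComp "real \<Rightarrow> real" nat sexp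

fun seval :: "sexp \<Rightarrow> real \<times> real \<Rightarrow> real" where
  "seval (SConst c) p = c"
| "seval STime p = fst p"
| "seval SSpace p = snd p"
| "seval (SAdd a b) p = seval a p + seval b p"
| "seval (SMult a b) p = seval a p * seval b p"
| "seval (SComp g n e) p = (deriv ^^ n) g (seval e p)"

fun sdt :: "sexp \<Rightarrow> sexp" where
  "sdt (SConst c) = SConst 0"
| "sdt STime = SConst 1"
| "sdt SSpace = SConst 0"
| "sdt (SAdd a b) = SAdd (sdt a) (sdt b)"
| "sdt (SMult a b) = SAdd (SMult (sdt a) b) (SMult a (sdt b))"
| "sdt (SComp g n e) = SMult (SComp g (Suc n) e) (sdt e)"

fun sdx :: "sexp \<Rightarrow> sexp" where
  "sdx (SConst c) = SConst 0"
| "sdx STime = SConst 0"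
| "sdx SSpace = SConst 1"
| "sdx (SAdd a b) = SAdd (sdx a) (sdx b)"
| "sdx (SMult a b) = SAdd (SMult (sdx a) b) (SMult a (sdx b))"
| "sdx (SComp g n e) = SMult (SComp g (Suc n) e) (sdx e)"

fun smooth_sexp :: "sexp \<Rightarrow> bool" where
  "smooth_sexp (SAdd a b) \<longleftrightarrow> smooth_sexp a \<and> smooth_sexp b"
| "smooth_sexp (SMult a b) \<longleftrightarrow> smooth_sexp a \<and> smooth_sexp b"
| "smooth_sexp (SComp g n e) \<longleftrightarrow> smooth1 g \<and> smooth_sexp e"
| "smooth_sexp _ \<longleftrightarrow> True"

lemma smooth_sexp_sdt: "smooth_sexp e \<Longrightarrow> smooth_sexp (sdt e)"
  by (induction e) auto

lemma smooth_sexp_sdx: "smooth_sexp e \<Longrightarrow> smooth_sexp (sdx e)"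
  by (induction e) auto

lemma smooth_sexp_sdt_iter: "smooth_sexp e \<Longrightarrow> smooth_sexp ((sdt ^^ i) e)"
  by (induction i) (auto simp: smooth_sexp_sdt)

lemma smooth_sexp_sdx_iter: "smooth_sexp e \<Longrightarrow> smooth_sexp ((sdx ^^ i) e)"
  by (induction i) (auto simp: smooth_sexp_sdx)

lemma smooth1_has_real_derivative:
  "smooth1 g \<Longrightarrow> ((deriv ^^ n) g has_real_derivative (deriv ^^ Suc n) g y) (at y)"
  unfolding smooth1_def by blast

lemma smooth1_continuous_on: "smooth1 g \<Longrightarrow> continuous_on A g"
  using smooth1_has_real_derivative[of g 0]
  by (auto intro!: continuous_at_imp_continuous_on DERIV_isCont)

lemma seval_has_real_derivative_time:
  "smooth_sexp e \<Longrightarrow> ((\<lambda>s. seval e (s, x)) has_real_derivative seval (sdt e) (t, x)) (at t)"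
proof (induction e arbitrary: t)
  case (SComp g n e)
  then show ?case
    using smooth1_has_real_derivative[of g n] by (auto intro!: DERIV_chain2[where f="(deriv ^^ n) g"])
qed (auto intro!: derivative_eq_intros)

lemma seval_has_real_derivative_space:
  "smooth_sexp e \<Longrightarrow> ((\<lambda>y. seval e (t, y)) has_real_derivative seval (sdx e) (t, x)) (at x)"
proof (induction e arbitrary: x)
  case (SComp g n e)
  then show ?case
    using smooth1_has_real_derivative[of g n] by (auto intro!: DERIV_chain2[where f="(deriv ^^ n) g"])
qed (auto intro!: derivative_eq_intros)

lemma continuous_on_seval: "smooth_sexp e \<Longrightarrow> continuous_on UNIV (seval e)"
proof (induction e)
  case (SComp g n e)
  have "continuous_on UNIV ((deriv ^^ n) g)"
    using SComp smooth1_has_real_derivative[of g n]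
    by (auto intro!: continuous_at_imp_continuous_on DERIV_isCont)
  then show ?case
    using SComp by (auto intro: continuous_on_compose2[where f="seval e"])
qed (auto intro!: continuous_intros)

lemma seval_sdt_sdx_commute: "smooth_sexp e \<Longrightarrow> seval (sdt (sdx e)) = seval (sdx (sdt e))"
  by (induction e) (auto simp: fun_eq_iff algebra_simps)

lemma seval_sdt_cong:
  assumes "smooth_sexp a" "smooth_sexp b" "seval a = seval b"
  shows "seval (sdt a) = seval (sdt b)"
proof
  fix p :: "real \<times> real"
  obtain t x where p: "p = (t, x)" by (cases p)
  show "seval (sdt a) p = seval (sdt b) p"
    unfolding p using seval_has_real_derivative_time[OF assms(1), of x t]
      seval_has_real_derivative_time[OF assms(2), of x t] assms(3) DERIV_unique by metis
qed

lemma seval_sdx_sdt_iter: "smooth_sexp e \<Longrightarrow> seval (sdx ((sdt ^^ i) e)) = seval ((sdt ^^ i) (sdx e))"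
proof (induction i)
  case (Suc i)
  then have "seval (sdx ((sdt ^^ Suc i) e)) = seval (sdt (sdx ((sdt ^^ i) e)))"
    using seval_sdt_sdx_commute[of "(sdt ^^ i) e"] smooth_sexp_sdt_iter by simp
  also have "\<dots> = seval (sdt ((sdt ^^ i) (sdx e)))"
    using Suc by (intro seval_sdt_cong) (auto intro: smooth_sexp_sdt_iter smooth_sexp_sdx)
  finally show ?case by simp
qed simp

lemma smooth2_seval: "smooth_sexp e \<Longrightarrow> smooth2 (seval e)"
  unfolding smooth2_def
proof (intro exI[of _ "\<lambda>i j. seval ((sdt ^^ i) ((sdx ^^ j) e))"] conjI allI)
  fix i j t x
  assume e: "smooth_sexp e"
  then have ij: "smooth_sexp ((sdt ^^ i) ((sdx ^^ j) e))"
    by (intro smooth_sexp_sdt_iter smooth_sexp_sdx_iter)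
  then show "continuous_on UNIV (seval ((sdt ^^ i) ((sdx ^^ j) e)))"
    by (rule continuous_on_seval)
  show "((\<lambda>s. seval ((sdt ^^ i) ((sdx ^^ j) e)) (s, x)) has_real_derivative
         seval ((sdt ^^ Suc i) ((sdx ^^ j) e)) (t, x)) (at t)"
    using seval_has_real_derivative_time[OF ij] by simp
  show "((\<lambda>y. seval ((sdt ^^ i) ((sdx ^^ j) e)) (t, y)) has_real_derivative
         seval ((sdt ^^ i) ((sdx ^^ Suc j) e)) (t, x)) (at x)"
    using seval_has_real_derivative_space[OF ij, of t x]
      seval_sdx_sdt_iter[OF smooth_sexp_sdx_iter[OF e], of i j] by simp
qed simp

lemma smooth1_seval_space: "smooth_sexp e \<Longrightarrow> smooth1 (\<lambda>x. seval e (0, x))"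
proof -
  assume e: "smooth_sexp e"
  have D: "((\<lambda>x. seval ((sdx ^^ n) e) (0, x)) has_real_derivative seval ((sdx ^^ Suc n) e) (0, x)) (at x)"
    for n x
    using seval_has_real_derivative_space[OF smooth_sexp_sdx_iter[OF e, of n], where t=0 and x=x] by simp
  have "(deriv ^^ n) (\<lambda>x. seval e (0, x)) = (\<lambda>x. seval ((sdx ^^ n) e) (0, x))" for n
    by (induction n) (auto simp: DERIV_imp_deriv[OF D])
  then show ?thesis
    unfolding smooth1_def using D by metis
qed

section \<open>A monotone smooth step\<close>

lemma smooth1_antiderivative:
  assumes "smooth1 s" "\<And>x. (S has_real_derivative s x) (at x)"
  shows "smooth1 S"
proof -
  have "deriv S = s"
    using assms(2) by (auto simp: fun_eq_iff intro: DERIV_imp_deriv)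
  then have "(deriv ^^ Suc n) S = (deriv ^^ n) s" for n
    by (simp add: funpow_Suc_right del: funpow.simps)
  then show ?thesis
    unfolding smooth1_def
    by (metis assms not0_implies_Suc smooth1_has_real_derivative funpow_0)
qed

locale smooth_step =
  fixes S s :: "real \<Rightarrow> real"
  assumes smooth1_step: "smooth1 S"
    and step_has_real_derivative: "\<And>x. (S has_real_derivative s x) (at x)"
    and step_slope_nonneg: "\<And>x. 0 \<le> s x"
    and step_slope_support: "\<And>x. s x \<noteq> 0 \<Longrightarrow> -1 < x \<and> x < 1"
    and step_left: "\<And>x. x \<le> -1 \<Longrightarrow> S x = 0"
    and step_right: "\<And>x. 1 \<le> x \<Longrightarrow> S x = 1"
begin

lemma continuous_on_step: "continuous_on A S"
  using smooth1_step by (rule smooth1_continuous_on)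

lemma continuous_on_step_slope: "continuous_on A s"
proof -
  have "deriv S = s"
    using step_has_real_derivative by (auto simp: fun_eq_iff intro: DERIV_imp_deriv)
  then show ?thesis
    using smooth1_has_real_derivative[OF smooth1_step, of 1]
    by (auto intro!: continuous_at_imp_continuous_on DERIV_isCont)
qed

lemma step_mono: "x \<le> y \<Longrightarrow> S x \<le> S y"
  using DERIV_nonneg_imp_nondecreasing step_has_real_derivative step_slope_nonneg by metis

lemma step_nonneg: "0 \<le> S x"
  using step_mono[of "min x (-1)" x] step_left[of "min x (-1)"] by simp

lemma step_le_one: "S x \<le> 1"
  using step_mono[of x "max x 1"] step_right[of "max x 1"] by simp

lemma step_nonzero: "S z \<noteq> 0 \<Longrightarrow> -1 < z"
  using step_left[of z] by force

lemma step_not_one: "S z \<noteq> 1 \<Longrightarrow> z < 1"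
  using step_right[of z] by force

lemma step_slope_outside: "x \<le> -1 \<or> 1 \<le> x \<Longrightarrow> s x = 0"
  using step_slope_support[of x] by force

lemma step_comp_has_real_derivative:
  "(g has_real_derivative g') (at t) \<Longrightarrow> D = s (g t) * g' \<Longrightarrow>
   ((\<lambda>t. S (g t)) has_real_derivative D) (at t)"
  using DERIV_chain2[OF step_has_real_derivative] by auto

end

lemma integral_vanishing_left_has_real_derivative:
  assumes cont: "continuous_on UNIV b" and left: "\<And>x. x \<le> -1 \<Longrightarrow> b x = 0"
  shows "((\<lambda>x. integral {-2..x} b) has_real_derivative b x) (at x)"
proof (cases "x < -1")
  case True
  have "((\<lambda>_. 0) has_real_derivative b x) (at x)"
    using left True by simp
  then show ?thesis
    by (rule has_field_derivative_transform_within_open[where S="{..<-1}"])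
      (use True left integral_cong[of "{-2.._}" b "\<lambda>_. 0"] in auto)
next
  case False
  have "((\<lambda>x. integral {-2..x} b) has_real_derivative b x) (at x within {-2..x+1})"
    by (rule integral_has_real_derivative) (use continuous_on_subset[OF cont] False in auto)
  moreover have "at x within {-2..x+1} = at x"
    by (rule at_within_interior) (use False in auto)
  ultimately show ?thesis
    by simp
qed

lemma smooth_step_from_bump:
  assumes b: "smooth1 b" "\<And>x. 0 \<le> b x" "\<And>x. b x \<noteq> 0 \<Longrightarrow> -1 < x \<and> x < 1" and "b z \<noteq> 0"
  defines "c \<equiv> integral {-1..1} b"
  shows "smooth_step (\<lambda>x. integral {-2..x} b / c) (\<lambda>x. b x / c)"
proof
  have cont: "continuous_on A b" for A
    using b(1) by (rule smooth1_continuous_on)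
  have outside: "b x = 0" if "x \<le> -1 \<or> 1 \<le> x" for x
    using b(3)[of x] that by force
  have "c \<noteq> 0"
    unfolding c_def using integral_eq_0_iff[of "-1" 1 b] cont b(2) assms(4) outside by fastforce
  then have c: "0 < c"
    unfolding c_def using b(2) cont by (simp add: integral_nonneg integrable_continuous_interval order_less_le)
  have left: "integral {-2..x} b = 0" if "x \<le> -1" for x
    using integral_cong[of "{-2..x}" b "\<lambda>_. 0"] outside that by simp
  have int: "b integrable_on {p..q}" for p q
    using cont by (rule integrable_continuous_interval)
  have right: "integral {-2..x} b = c" if "1 \<le> x" for x
  proof -
    have "integral {-2..x} b = integral {-2..-1} b + c + integral {1..x} b"
      unfolding c_def using that int Henstock_Kurzweil_Integration.integral_combine[of "-2" "-1" 1 b]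
        Henstock_Kurzweil_Integration.integral_combine[of "-2" 1 x b] by simp
    moreover have "integral {-2..-1} b = 0" "integral {1..x} b = 0"
      using integral_cong[of "{-2..-1}" b "\<lambda>_. 0"] integral_cong[of "{1..x}" b "\<lambda>_. 0"] outside by auto
    ultimately show ?thesis by simp
  qed
  show D: "((\<lambda>x. integral {-2..x} b / c) has_real_derivative b x / c) (at x)" for x
    using integral_vanishing_left_has_real_derivative[OF cont outside[OF disjI1], of x] c
    by (auto intro!: derivative_eq_intros)
  have "smooth1 (\<lambda>x. seval (SMult (SConst (1 / c)) (SComp b 0 SSpace)) (0, x))"
    using b(1) by (intro smooth1_seval_space) simp
  then have "smooth1 (\<lambda>x. b x / c)"
    by simp
  then show "smooth1 (\<lambda>x. integral {-2..x} b / c)"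
    using D by (rule smooth1_antiderivative)
  show "0 \<le> b x / c" for x
    using b(2) c by simp
  show "b x / c \<noteq> 0 \<Longrightarrow> -1 < x \<and> x < 1" for x
    using b(3) by simp
  show "x \<le> -1 \<Longrightarrow> integral {-2..x} b / c = 0" for x
    using left by simp
  show "1 \<le> x \<Longrightarrow> integral {-2..x} b / c = 1" for x
    using right c by simp
qed

lemma cutoff_left:
  assumes "cutoff psi" "x \<le> -1"
  shows "psi x = 0"
  using assms closure_subset[of "{x. psi x \<noteq> 0}"] unfolding cutoff_def by fastforce

lemma cutoff_right:
  assumes "cutoff psi" "1 \<le> x"
  shows "psi x = 1"
  using assms closure_subset[of "{x. 1 - psi x \<noteq> 0}"] unfolding cutoff_def by fastforce

text \<open>The cutoff need not be monotone, so the step is built from the bump \<open>\<psi> (1 - \<psi>)\<close>.\<close>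

lemma cutoff_smooth_step:
  assumes "cutoff psi"
  obtains S s where "smooth_step S s"
proof -
  have psi: "smooth1 psi" "\<And>x. 0 \<le> psi x \<and> psi x \<le> 1"
    using assms unfolding cutoff_def by auto
  define b where "b x = psi x * (1 - psi x)" for x
  obtain z where "psi z = 1/2"
    using IVT[of psi "-1" "1/2" 1] cutoff_left[OF assms, of "-1"] cutoff_right[OF assms, of 1]
      smooth1_continuous_on[OF psi(1), of UNIV] by (auto simp: continuous_on_eq_continuous_at)
  then have "b z \<noteq> 0"
    by (simp add: b_def)
  moreover have "smooth1 (\<lambda>x. seval (SMult (SComp psi 0 SSpace)
      (SAdd (SConst 1) (SMult (SConst (-1)) (SComp psi 0 SSpace)))) (0, x))"
    using psi(1) by (intro smooth1_seval_space) simp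
  then have "smooth1 b"
    by (simp add: b_def[abs_def])
  moreover have "0 \<le> b x" for x
    using psi(2)[of x] by (simp add: b_def)
  moreover have "b x \<noteq> 0 \<Longrightarrow> -1 < x \<and> x < 1" for x
    using cutoff_left[OF assms, of x] cutoff_right[OF assms, of x] by (force simp: b_def)
  ultimately show ?thesis
    using smooth_step_from_bump that by blast
qed

lemma L2_abs_le_of_oscillation:
  assumes "L2 f" and osc: "\<And>x y. \<bar>x - y\<bar> \<le> 1 \<Longrightarrow> \<bar>f x - f y\<bar> \<le> K"
  shows "\<bar>f x\<bar> \<le> K + sqrt (LINT y|lborel. (f y)\<^sup>2) + 1"
proof (rule ccontr)
  define I where "I = (LINT y|lborel. (f y)\<^sup>2)"
  define m where "m = sqrt I + 1"
  assume "\<not> ?thesis"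
  then have big: "K + m < \<bar>f x\<bar>"
    by (simp add: I_def m_def)
  have I: "0 \<le> I"
    unfolding I_def by simp
  then have m: "0 < m"
    unfolding m_def using real_sqrt_ge_zero[OF I] by linarith
  have "indicator {x..x+1} y * m\<^sup>2 \<le> (f y)\<^sup>2" for y
  proof (cases "y \<in> {x..x+1}")
    case True
    then have "m \<le> \<bar>f y\<bar>"
      using osc[of y x] big by auto
    then have "m\<^sup>2 \<le> \<bar>f y\<bar>\<^sup>2"
      using m by (intro power_mono) auto
    then show ?thesis
      using True by simp
  qed simp
  then have "(LINT y|lborel. indicator {x..x+1} y * m\<^sup>2) \<le> I"
    unfolding I_def using \<open>L2 f\<close> by (intro integral_mono) (auto simp: L2_def)
  then have "m\<^sup>2 \<le> I"
    by simp
  moreover have "m\<^sup>2 = I + 2 * sqrt I + 1"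
    using I by (simp add: m_def power2_eq_square algebra_simps)
  ultimately show False
    using real_sqrt_ge_zero[OF I] by linarith
qed

lemma E2_bounded:
  assumes "cutoff psi" "E2 psi f" and osc: "\<And>x y. \<bar>x - y\<bar> \<le> 1 \<Longrightarrow> \<bar>f x - f y\<bar> \<le> K"
  shows "bdd_above (range (\<lambda>x. \<bar>f x\<bar>))"
proof -
  obtain g a b where "H1 g" and f: "\<And>x. f x = g x + (a * psi x + b * (1 - psi x))"
    using assms(2) unfolding E2_def by (auto simp: add.assoc)
  have tail: "\<bar>a * psi x + b * (1 - psi x)\<bar> \<le> \<bar>a\<bar> + \<bar>b\<bar>" for x
  proof -
    have "0 \<le> psi x" "psi x \<le> 1"
      using assms(1) unfolding cutoff_def by auto
    then have "\<bar>a * psi x\<bar> \<le> \<bar>a\<bar>" "\<bar>b * (1 - psi x)\<bar> \<le> \<bar>b\<bar>"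
      by (auto simp: abs_mult intro: mult_left_le)
    then show ?thesis
      using abs_triangle_ineq[of "a * psi x" "b * (1 - psi x)"] by linarith
  qed
  have "\<bar>g x - g y\<bar> \<le> K + 2 * (\<bar>a\<bar> + \<bar>b\<bar>)" if "\<bar>x - y\<bar> \<le> 1" for x y
    using osc[OF that] tail[of x] tail[of y] f[of x] f[of y] by (smt (verit))
  then have "\<bar>g x\<bar> \<le> K + 2 * (\<bar>a\<bar> + \<bar>b\<bar>) + sqrt (LINT y|lborel. (g y)\<^sup>2) + 1" for x
    using \<open>H1 g\<close> unfolding H1_def by (intro L2_abs_le_of_oscillation) auto
  then have "\<bar>f x\<bar> \<le> K + 3 * (\<bar>a\<bar> + \<bar>b\<bar>) + sqrt (LINT y|lborel. (g y)\<^sup>2) + 1" for x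
    using f[of x] tail[of x] by (smt (verit))
  then show ?thesis
    by (intro bdd_aboveI2)
qed

section \<open>Mass behind a barrier\<close>

text \<open>All that is used of a weak conservative solution: finiteness of \<open>\<mu>(t)\<close>, the weak
  continuity equation from (iii) and the weak continuity (vi).\<close>

locale continuity_eq_solution =
  fixes mu :: "real \<Rightarrow> real measure" and u :: "real \<Rightarrow> real \<Rightarrow> real"
  assumes sets_mu: "\<And>t. 0 \<le> t \<Longrightarrow> sets (mu t) = sets borel"
    and finite_mu: "\<And>t. 0 \<le> t \<Longrightarrow> finite_measure (mu t)"
    and weak_continuity_eq: "\<And>phi. test_fun phi \<Longrightarrow>
      (LINT t:{0..}|lborel. LINT x|mu t. d_t phi t x + u t x * d_x phi t x) = - (LINT x|mu 0. phi (0, x))"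
    and vaguely_continuous: "\<And>g. continuous_on UNIV g \<Longrightarrow> compact (closure {x. g x \<noteq> (0::real)}) \<Longrightarrow>
      continuous_on {0..} (\<lambda>t. LINT x|mu t. g x)"
begin

lemma integrable_bounded_continuous:
  fixes g :: "real \<Rightarrow> real"
  assumes "0 \<le> t" "continuous_on UNIV g" "\<And>x. \<bar>g x\<bar> \<le> K"
  shows "integrable (mu t) g"
proof -
  interpret finite_measure "mu t"
    using finite_mu[OF assms(1)] .
  have "g \<in> borel_measurable (mu t)"
    using borel_measurable_continuous_onI[OF assms(2)] measurable_cong_sets[OF sets_mu[OF assms(1)] refl]
    by blast
  then show ?thesis
    using assms(3) by (intro integrable_const_bound[where B=K]) auto
qed

lemma integral_indicator_measure:
  assumes "0 \<le> t" "A \<in> sets borel"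
  shows "integrable (mu t) (indicator A :: real \<Rightarrow> real)" "(LINT x|mu t. indicator A x) = measure (mu t) A"
proof -
  interpret finite_measure "mu t"
    using finite_mu[OF assms(1)] .
  have "A \<in> sets (mu t)"
    using sets_mu[OF assms(1)] assms(2) by simp
  then show "integrable (mu t) (indicator A :: real \<Rightarrow> real)" "(LINT x|mu t. indicator A x) = measure (mu t) A"
    by (auto intro!: integrable_real_indicator simp: less_top[symmetric])
qed

lemma integral_le_measure:
  assumes "0 \<le> t" "A \<in> sets borel" "continuous_on UNIV g" "\<And>x. 0 \<le> g x" "\<And>x. g x \<le> indicator A x"
  shows "(LINT x|mu t. g x) \<le> measure (mu t) A"
proof -
  have "\<bar>g x\<bar> \<le> 1" for x
    using assms(4,5)[of x] by (cases "x \<in> A") auto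
  then have "(LINT x|mu t. g x) \<le> (LINT x|mu t. indicator A x)"
    using assms
    by (intro integral_mono integrable_bounded_continuous[of t g 1] integral_indicator_measure(1)) auto
  then show ?thesis
    using integral_indicator_measure[OF assms(1,2)] by simp
qed

lemma measure_le_integral:
  assumes "0 \<le> t" "A \<in> sets borel" "continuous_on UNIV g" "\<And>x. g x \<le> 1" "\<And>x. indicator A x \<le> g x"
  shows "measure (mu t) A \<le> (LINT x|mu t. g x)"
proof -
  have "\<bar>g x\<bar> \<le> 1" for x
    using assms(4,5)[of x] by (cases "x \<in> A") auto
  then have "(LINT x|mu t. indicator A x) \<le> (LINT x|mu t. g x)"
    using assms
    by (intro integral_mono integrable_bounded_continuous[of t g 1] integral_indicator_measure(1)) auto
  then show ?thesis
    using integral_indicator_measure[OF assms(1,2)] by simp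
qed

end

lemma HS_weak_cons_sol_continuity_eq:
  assumes "HS_weak_cons_sol psi u mu"
  shows "continuity_eq_solution mu u"
proof -
  from assms obtain ux where sol:
    "\<forall>t\<ge>0. sets (mu t) = sets borel \<and> finite_measure (mu t)"
    "\<forall>phi. test_fun phi \<longrightarrow> (LINT t:{0..}|lborel. LINT x|lborel.
            u t x * d_t phi t x + (u t x)\<^sup>2 / 2 * d_x phi t x
            + 1/4 * (measure (mu t) {..<x} - measure (mu t) {x<..}) * phi (t, x))
          = - (LINT x|lborel. u 0 x * phi (0, x)) \<and>
        (LINT t:{0..}|lborel. LINT x|mu t. d_t phi t x + u t x * d_x phi t x)
          = - (LINT x|mu 0. phi (0, x))"
    "\<forall>g. continuous_on UNIV g \<and> compact (closure {x. g x \<noteq> (0::real)}) \<longrightarrow>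
        continuous_on {0..} (\<lambda>t. LINT x|mu t. g x)"
    unfolding HS_weak_cons_sol_def by (elim exE conjE) (rule that)
  show ?thesis
  proof (rule continuity_eq_solution.intro)
    show "sets (mu t) = sets borel" "finite_measure (mu t)" if "0 \<le> t" for t
      using sol(1) that by blast+
  qed (use sol(2,3) in blast)+
qed

lemma HS_weak_cons_sol_E2:
  assumes "HS_weak_cons_sol psi u mu" "0 \<le> t"
  shows "E2 psi (u t)"
proof -
  from assms(1) have "\<forall>t\<ge>0. E2 psi (u t)"
    unfolding HS_weak_cons_sol_def by (elim exE conjE)
  then show ?thesis
    using assms(2) by blast
qed

locale barrier_test = continuity_eq_solution mu u + smooth_step S s
  for mu :: "real \<Rightarrow> real measure" and u :: "real \<Rightarrow> real \<Rightarrow> real" and S s :: "real \<Rightarrow> real" +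
  fixes y :: "real \<Rightarrow> real" and t1 h \<epsilon> v R Y1 B :: real
  assumes smooth1_y: "smooth1 y"
    and t1_pos: "0 < t1" and h_pos: "0 < h" and h_le: "h \<le> t1" and \<epsilon>_pos: "0 < \<epsilon>" and v_nonpos: "v \<le> 0"
    and speed_lower: "\<And>t x. 0 \<le> t \<Longrightarrow> t < t1 \<Longrightarrow> v \<le> u t x"
    and speed_upper: "\<And>t x. 0 \<le> t \<Longrightarrow> t < t1 \<Longrightarrow> y t - \<epsilon> < x \<Longrightarrow> x < y t \<Longrightarrow> u t x \<le> deriv y t"
    and barrier_le: "\<And>t. t1 - h < t \<Longrightarrow> t < t1 \<Longrightarrow> y t \<le> Y1"
    and mass_le: "\<And>t. 0 \<le> t \<Longrightarrow> t1 - h < t \<Longrightarrow> t < t1 \<Longrightarrow> measure (mu t) {v * t1 - R - 1..Y1} \<le> B"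
begin

text \<open>The test function is a time cutoff, equal to 1 on \<open>[-1, t\<^sub>1 - h]\<close> and vanishing from
  \<open>t\<^sub>1\<close> on, times a window in space between a left edge moving with the lower speed bound \<open>v\<close>
  and the barrier \<open>y\<close>. Only the derivative of the time cutoff has a sign that does not come
  from the flow, and it is concentrated on \<open>(t\<^sub>1 - h, t\<^sub>1)\<close>, where the mass is at most \<open>B\<close>.\<close>

definition "time_arg t = 2 * (t1 - t) / h - 1"
definition "left_arg t x = 2 * (x - v * t + R) + 1"
definition "right_arg t x = 2 * (x - y t) / \<epsilon> + 1"

definition "time_cutoff t = S (t + 2) * S (time_arg t)"
definition "time_cutoff' t = s (t + 2) * S (time_arg t) - 2 / h * S (t + 2) * s (time_arg t)"

definition "window t x = S (left_arg t x) * (1 - S (right_arg t x))"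
definition "window_t t x = - 2 * v * s (left_arg t x) * (1 - S (right_arg t x))
  + 2 / \<epsilon> * deriv y t * S (left_arg t x) * s (right_arg t x)"
definition "window_x t x = 2 * s (left_arg t x) * (1 - S (right_arg t x))
  - 2 / \<epsilon> * S (left_arg t x) * s (right_arg t x)"

definition "test_fn = (\<lambda>(t, x). time_cutoff t * window t x)"

lemma y_has_real_derivative: "(y has_real_derivative deriv y t) (at t)"
  using smooth1_has_real_derivative[OF smooth1_y, of 0] by simp

lemma time_cutoff_has_real_derivative: "(time_cutoff has_real_derivative time_cutoff' t) (at t)"
proof -
  have "(time_arg has_real_derivative - 2 / h) (at t)"
    unfolding time_arg_def[abs_def] using h_pos by (auto intro!: derivative_eq_intros)
  then show ?thesis
    unfolding time_cutoff_def[abs_def] time_cutoff'_def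
    by (auto intro!: derivative_eq_intros step_comp_has_real_derivative)
qed

lemma window_has_real_derivative_time: "((\<lambda>t. window t x) has_real_derivative window_t t x) (at t)"
proof -
  have "((\<lambda>t. left_arg t x) has_real_derivative - 2 * v) (at t)"
    unfolding left_arg_def by (auto intro!: derivative_eq_intros)
  moreover have "((\<lambda>t. right_arg t x) has_real_derivative - 2 / \<epsilon> * deriv y t) (at t)"
    unfolding right_arg_def using \<epsilon>_pos
    by (auto intro!: derivative_eq_intros y_has_real_derivative simp: field_simps)
  ultimately show ?thesis
    unfolding window_def window_t_def
    by (auto intro!: derivative_eq_intros step_comp_has_real_derivative simp: algebra_simps)
qed

lemma window_has_real_derivative_space: "((\<lambda>x. window t x) has_real_derivative window_x t x) (at x)"
proof -
  have "((\<lambda>x. left_arg t x) has_real_derivative 2) (at x)"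
    unfolding left_arg_def by (auto intro!: derivative_eq_intros)
  moreover have "((\<lambda>x. right_arg t x) has_real_derivative 2 / \<epsilon>) (at x)"
    unfolding right_arg_def using \<epsilon>_pos by (auto intro!: derivative_eq_intros simp: field_simps)
  ultimately show ?thesis
    unfolding window_def window_x_def
    by (auto intro!: derivative_eq_intros step_comp_has_real_derivative simp: algebra_simps)
qed

lemma d_t_test_fn: "d_t test_fn t x = time_cutoff' t * window t x + time_cutoff t * window_t t x"
  unfolding d_t_def test_fn_def
  by (auto intro!: DERIV_imp_deriv derivative_eq_intros time_cutoff_has_real_derivative
      window_has_real_derivative_time)

lemma d_x_test_fn: "d_x test_fn t x = time_cutoff t * window_x t x"
  unfolding d_x_def test_fn_def
  by (auto intro!: DERIV_imp_deriv derivative_eq_intros window_has_real_derivative_space)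

lemma time_cutoff_nonneg: "0 \<le> time_cutoff t"
  by (simp add: time_cutoff_def step_nonneg)

lemma time_arg_after: "t1 \<le> t \<Longrightarrow> time_arg t \<le> -1"
  using h_pos by (simp add: time_arg_def divide_nonpos_pos)

lemma time_cutoff_after: "t1 \<le> t \<Longrightarrow> time_cutoff t = 0"
  by (simp add: time_cutoff_def time_arg_after step_left)

lemma time_cutoff_initial: "time_cutoff 0 = 1"
proof -
  have "1 \<le> time_arg 0"
    using h_pos h_le by (simp add: time_arg_def field_simps)
  then show ?thesis
    by (simp add: time_cutoff_def step_right)
qed

lemma time_cutoff'_eq_slope: "0 \<le> t \<Longrightarrow> time_cutoff' t = - 2 / h * s (time_arg t)"
  by (simp add: time_cutoff'_def step_right step_slope_outside)

lemma time_cutoff'_nonpos: "0 \<le> t \<Longrightarrow> time_cutoff' t \<le> 0"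
  using h_pos by (simp add: time_cutoff'_eq_slope step_slope_nonneg)

lemma time_cutoff'_support: "0 \<le> t \<Longrightarrow> time_cutoff' t \<noteq> 0 \<Longrightarrow> t1 - h < t \<and> t < t1"
  using step_slope_support[of "time_arg t"] h_pos
  by (auto simp: time_cutoff'_eq_slope time_arg_def field_simps)

lemma continuous_on_time_cutoff': "continuous_on A time_cutoff'"
  using h_pos unfolding time_cutoff'_def[abs_def] time_arg_def
  by (intro continuous_intros continuous_on_compose2[OF continuous_on_step_slope]
      continuous_on_compose2[OF continuous_on_step]) auto

lemma window_bounds: "0 \<le> window t x" "window t x \<le> 1"
  using step_nonneg step_le_one by (auto simp: window_def intro: mult_le_one)

lemma continuous_on_window: "continuous_on A (window t)"
  using \<epsilon>_pos unfolding window_def[abs_def] left_arg_def right_arg_def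
  by (intro continuous_intros continuous_on_compose2[OF continuous_on_step]) auto

lemma window_support: "window t x \<noteq> 0 \<Longrightarrow> v * t - R - 1 < x \<and> x < y t"
  using step_nonzero[of "left_arg t x"] step_not_one[of "right_arg t x"] \<epsilon>_pos
  by (auto simp: window_def left_arg_def right_arg_def field_simps)

lemma window_le_indicator:
  assumes "t1 - h < t" "t < t1"
  shows "window t x \<le> indicator {v * t1 - R - 1..Y1} x"
proof (cases "window t x = 0")
  case False
  have "v * t1 \<le> v * t"
    using v_nonpos assms by (intro mult_left_mono_neg) auto
  then have "x \<in> {v * t1 - R - 1..Y1}"
    using window_support[OF False] barrier_le[OF assms] by auto
  then show ?thesis
    using window_bounds by simp
qed simp

text \<open>The left edge of the window moves with speed \<open>v \<le> u\<close> and the right edge with speed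
  \<open>y' \<ge> u\<close>, so the window is a subsolution of the transport equation.\<close>
lemma window_transport_nonneg:
  assumes "0 \<le> t" "t < t1"
  shows "0 \<le> window_t t x + u t x * window_x t x"
proof -
  have eq: "window_t t x + u t x * window_x t x
      = 2 * s (left_arg t x) * (1 - S (right_arg t x)) * (u t x - v)
      + 2 / \<epsilon> * S (left_arg t x) * s (right_arg t x) * (deriv y t - u t x)"
    using \<epsilon>_pos by (simp add: window_t_def window_x_def field_simps)
  have "0 \<le> s (right_arg t x) * (deriv y t - u t x)"
  proof (cases "s (right_arg t x) = 0")
    case False
    then have "y t - \<epsilon> < x" "x < y t"
      using step_slope_support[of "right_arg t x"] \<epsilon>_pos by (auto simp: right_arg_def field_simps)
    then show ?thesis
      using speed_upper[OF assms] step_slope_nonneg by simp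
  qed simp
  moreover have "0 \<le> s (left_arg t x) * (1 - S (right_arg t x)) * (u t x - v)"
    using speed_lower[OF assms] step_slope_nonneg step_le_one by simp
  ultimately show ?thesis
    unfolding eq using \<epsilon>_pos step_nonneg
    by (metis (no_types, lifting) add_nonneg_nonneg divide_nonneg_pos mult.assoc mult_nonneg_nonneg zero_le_numeral)
qed

lemma test_fn_transport_ge:
  assumes "0 \<le> t"
  shows "time_cutoff' t * window t x \<le> d_t test_fn t x + u t x * d_x test_fn t x"
proof -
  have "d_t test_fn t x + u t x * d_x test_fn t x
      = time_cutoff' t * window t x + time_cutoff t * (window_t t x + u t x * window_x t x)"
    by (simp add: d_t_test_fn d_x_test_fn algebra_simps)
  moreover have "0 \<le> time_cutoff t * (window_t t x + u t x * window_x t x)"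
    using window_transport_nonneg[OF assms] time_cutoff_nonneg time_cutoff_after
    by (cases "t < t1") auto
  ultimately show ?thesis
    by simp
qed

lemma B_nonneg: "0 \<le> B"
  using mass_le[of "t1 - h / 2"] h_pos h_le by (simp add: order_trans[OF measure_nonneg])

lemma integral_test_fn_transport_ge:
  assumes "0 \<le> t"
  shows "time_cutoff' t * B \<le> (LINT x|mu t. d_t test_fn t x + u t x * d_x test_fn t x)"
proof -
  have "time_cutoff' t * B \<le> time_cutoff' t * (LINT x|mu t. window t x)"
  proof (cases "time_cutoff' t = 0")
    case False
    then have near: "t1 - h < t" "t < t1"
      using time_cutoff'_support[OF assms] by auto
    have "(LINT x|mu t. window t x) \<le> measure (mu t) {v * t1 - R - 1..Y1}"
      using window_le_indicator[OF near] window_bounds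
      by (intro integral_le_measure assms) (auto intro!: continuous_on_window)
    then show ?thesis
      using mass_le[OF assms near] time_cutoff'_nonpos[OF assms] by (simp add: mult_left_mono_neg)
  qed simp
  also have "\<dots> = (LINT x|mu t. time_cutoff' t * window t x)"
    by simp
  also have "\<dots> \<le> (LINT x|mu t. d_t test_fn t x + u t x * d_x test_fn t x)"
  proof (cases "integrable (mu t) (\<lambda>x. d_t test_fn t x + u t x * d_x test_fn t x)")
    case True
    have "integrable (mu t) (\<lambda>x. time_cutoff' t * window t x)"
      using window_bounds
      by (intro integrable_mult_right integrable_bounded_continuous[of t _ 1] assms continuous_on_window) auto
    then show ?thesis
      using True test_fn_transport_ge[OF assms] by (rule integral_mono)
  next
    case False
    have "(LINT x|mu t. time_cutoff' t * window t x) \<le> 0"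
      using time_cutoff'_nonpos[OF assms] window_bounds
      by (simp add: mult_nonpos_nonneg integral_nonneg)
    then show ?thesis
      using False by (simp add: not_integrable_integral_eq)
  qed
  finally show ?thesis .
qed

lemma integral_time_cutoff':
  shows "set_integrable lborel {0..} (\<lambda>t. time_cutoff' t * B)"
    and "(LINT t:{0..}|lborel. time_cutoff' t * B) = - B"
proof -
  have vanish: "indicator {0..} t *\<^sub>R (time_cutoff' t * B) = indicator {0..t1} t *\<^sub>R (time_cutoff' t * B)"
    for t :: real
    using time_cutoff'_support[of t] by (cases "t1 \<le> t") (auto simp: indicator_def)
  have cont: "continuous_on A (\<lambda>t. time_cutoff' t * B)" for A
    by (intro continuous_intros continuous_on_time_cutoff')
  show "set_integrable lborel {0..} (\<lambda>t. time_cutoff' t * B)"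
    unfolding set_integrable_def vanish
    using borel_integrable_atLeastAtMost'[OF cont] unfolding set_integrable_def .
  have "(LINT t:{0..}|lborel. time_cutoff' t * B) = (LINT t:{0..t1}|lborel. time_cutoff' t * B)"
    unfolding set_lebesgue_integral_def vanish ..
  also have "\<dots> = (LBINT t=ereal 0..ereal t1. time_cutoff' t * B)"
    using t1_pos by (intro interval_integral_Icc[symmetric]) simp
  also have "\<dots> = B * time_cutoff t1 - B * time_cutoff 0"
  proof (rule interval_integral_FTC_finite[OF cont])
    fix t
    have "((\<lambda>t. B * time_cutoff t) has_real_derivative time_cutoff' t * B) (at t)"
      using DERIV_cmult[OF time_cutoff_has_real_derivative, of B] by (simp add: mult.commute)
    then show "((\<lambda>t. B * time_cutoff t) has_vector_derivative time_cutoff' t * B) (at t within {min 0 t1..max 0 t1})"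
      by (simp add: has_real_derivative_iff_has_vector_derivative has_vector_derivative_at_within)
  qed
  finally show "(LINT t:{0..}|lborel. time_cutoff' t * B) = - B"
    by (simp add: time_cutoff_after time_cutoff_initial)
qed

lemma test_fn_seval: "\<exists>e. smooth_sexp e \<and> seval e = test_fn"
proof -
  let ?S = "\<lambda>e. SComp S 0 e"
  define et where "et = SAdd (SMult (SConst (- 2 / h)) STime) (SConst (2 * t1 / h - 1))"
  define el where "el = SAdd (SMult (SConst 2) SSpace) (SAdd (SMult (SConst (- 2 * v)) STime) (SConst (2 * R + 1)))"
  define er where "er = SAdd (SMult (SConst (2 / \<epsilon>)) SSpace)
    (SAdd (SMult (SConst (- 2 / \<epsilon>)) (SComp y 0 STime)) (SConst 1))"
  have args: "seval et (t, x) = time_arg t" "seval el (t, x) = left_arg t x" "seval er (t, x) = right_arg t x"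
    for t x
    using h_pos \<epsilon>_pos
    by (simp_all add: et_def el_def er_def time_arg_def left_arg_def right_arg_def field_simps)
  let ?e = "SMult (SMult (?S (SAdd STime (SConst 2))) (?S et))
    (SMult (?S el) (SAdd (SConst 1) (SMult (SConst (-1)) (?S er))))"
  have "smooth_sexp ?e"
    using smooth1_step smooth1_y by (simp add: et_def el_def er_def)
  moreover have "seval ?e = test_fn"
    by (auto simp: fun_eq_iff test_fn_def time_cutoff_def window_def args)
  ultimately show ?thesis
    by blast
qed

lemma continuous_on_test_fn: "continuous_on UNIV test_fn"
  using test_fn_seval continuous_on_seval by metis

lemma test_fun_test_fn: "test_fun test_fn"
  unfolding test_fun_def
proof
  show "smooth2 test_fn"
    using test_fn_seval smooth2_seval by metis
  obtain M where M: "\<And>t. t \<in> {-3..t1} \<Longrightarrow> y t \<le> M"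
    using continuous_attains_sup[OF compact_Icc _ smooth1_continuous_on[OF smooth1_y], of "-3" t1]
      t1_pos by fastforce
  have "{p. test_fn p \<noteq> 0} \<subseteq> {-3..t1} \<times> {v * t1 - R - 1..M}"
  proof
    fix p
    assume "p \<in> {p. test_fn p \<noteq> 0}"
    then obtain t x where p: "p = (t, x)" "test_fn (t, x) \<noteq> 0"
      by (cases p) auto
    then have nz: "S (t + 2) \<noteq> 0" "S (time_arg t) \<noteq> 0" "window t x \<noteq> 0"
      by (auto simp: test_fn_def time_cutoff_def)
    have t: "-3 < t" "t < t1"
      using step_nonzero[OF nz(1)] step_nonzero[OF nz(2)] by (simp, meson leD not_le time_arg_after)
    have "v * t1 \<le> v * t"
      using v_nonpos t by (intro mult_left_mono_neg) auto
    then show "p \<in> {-3..t1} \<times> {v * t1 - R - 1..M}"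
      using p t window_support[OF nz(3)] M[of t] by auto
  qed
  then have "bounded {p. test_fn p \<noteq> 0}"
    by (rule bounded_subset[OF bounded_Times[OF bounded_closed_interval bounded_closed_interval]])
  then show "compact (closure {p. test_fn p \<noteq> 0})"
    by simp
qed

lemma integral_test_fn_initial_le: "(LINT x|mu 0. test_fn (0, x)) \<le> B"
proof (cases "set_integrable lborel {0..} (\<lambda>t. LINT x|mu t. d_t test_fn t x + u t x * d_x test_fn t x)")
  case True
  have "- B = (LINT t:{0..}|lborel. time_cutoff' t * B)"
    using integral_time_cutoff'(2) by simp
  also have "\<dots> \<le> (LINT t:{0..}|lborel. LINT x|mu t. d_t test_fn t x + u t x * d_x test_fn t x)"
    by (rule set_integral_mono[OF integral_time_cutoff'(1) True]) (simp add: integral_test_fn_transport_ge)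
  also have "\<dots> = - (LINT x|mu 0. test_fn (0, x))"
    by (rule weak_continuity_eq[OF test_fun_test_fn])
  finally show ?thesis
    by simp
next
  case False
  then have "(LINT t:{0..}|lborel. LINT x|mu t. d_t test_fn t x + u t x * d_x test_fn t x) = 0"
    unfolding set_integrable_def set_lebesgue_integral_def by (rule not_integrable_integral_eq)
  then show ?thesis
    using weak_continuity_eq[OF test_fun_test_fn] B_nonneg by simp
qed

lemma indicator_le_test_fn_initial: "indicator {-R..<y 0 - \<epsilon>} x \<le> test_fn (0, x)"
proof (cases "x \<in> {-R..<y 0 - \<epsilon>}")
  case True
  then have "1 \<le> left_arg 0 x" "right_arg 0 x \<le> -1"
    using \<epsilon>_pos by (auto simp: left_arg_def right_arg_def field_simps)
  then show ?thesis
    using True by (simp add: test_fn_def time_cutoff_initial window_def step_left step_right)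
next
  case False
  then show ?thesis
    using time_cutoff_nonneg[of 0] window_bounds[of 0 x] by (simp add: test_fn_def)
qed

theorem measure_initial_le: "measure (mu 0) {-R..<y 0 - \<epsilon>} \<le> B"
proof -
  have "continuous_on UNIV (\<lambda>x. test_fn (0, x))"
    using continuous_on_test_fn by (rule continuous_on_compose2) (auto intro!: continuous_intros)
  moreover have "test_fn (0, x) \<le> 1" for x
    using window_bounds[of 0 x] by (simp add: test_fn_def time_cutoff_initial)
  ultimately have "measure (mu 0) {-R..<y 0 - \<epsilon>} \<le> (LINT x|mu 0. test_fn (0, x))"
    by (intro measure_le_integral indicator_le_test_fn_initial) auto
  also have "\<dots> \<le> B"
    by (rule integral_test_fn_initial_le)
  finally show ?thesis .
qed

end

definition trapezoid :: "real \<Rightarrow> real \<Rightarrow> real \<Rightarrow> real \<Rightarrow> real" where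
  "trapezoid a b c x = max 0 (min 1 (min (x - a) ((c - x) / (c - b))))"

lemma continuous_on_trapezoid: "b < c \<Longrightarrow> continuous_on A (trapezoid a b c)"
  unfolding trapezoid_def[abs_def] by (intro continuous_intros) auto

lemma trapezoid_bounds: "0 \<le> trapezoid a b c x" "trapezoid a b c x \<le> 1"
  by (auto simp: trapezoid_def)

lemma trapezoid_support:
  assumes "b < c" "trapezoid a b c x \<noteq> 0"
  shows "a < x \<and> x < c"
proof -
  have "0 < min 1 (min (x - a) ((c - x) / (c - b)))"
    using assms(2) by (auto simp: trapezoid_def max_def split: if_splits)
  then have "0 < x - a" "0 < (c - x) / (c - b)"
    by auto
  then show ?thesis
    using assms(1) by (simp add: zero_less_divide_iff)
qed

lemma compact_support_trapezoid:
  assumes "b < c"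
  shows "compact (closure {x. trapezoid a b c x \<noteq> 0})"
proof -
  have "{x. trapezoid a b c x \<noteq> 0} \<subseteq> {a..c}"
    using trapezoid_support[OF assms] by force
  then have "bounded {x. trapezoid a b c x \<noteq> 0}"
    by (rule bounded_subset[OF bounded_closed_interval])
  then show ?thesis
    by simp
qed

lemma trapezoid_le_indicator: "b < c \<Longrightarrow> trapezoid a b c x \<le> indicator {..<c} x"
  using trapezoid_support[of b c a x] trapezoid_bounds[of a b c x]
  by (cases "trapezoid a b c x = 0") (auto simp: indicator_def)

lemma indicator_le_trapezoid: "b < c \<Longrightarrow> indicator {a+1..b} x \<le> trapezoid a b c x"
  by (auto simp: indicator_def trapezoid_def le_divide_eq)

context continuity_eq_solution
begin

lemma mass_near_time_le:
  assumes "0 \<le> t1" "b < Y" "0 < e"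
  obtains h where "0 < h"
    "\<And>t. 0 \<le> t \<Longrightarrow> dist t t1 < h \<Longrightarrow> measure (mu t) {a..b} \<le> measure (mu t1) {..<Y} + e"
proof -
  define f where "f = trapezoid (a - 1) b Y"
  have f: "continuous_on UNIV f" "\<And>x. 0 \<le> f x" "\<And>x. f x \<le> 1"
    unfolding f_def using assms(2) by (auto intro: continuous_on_trapezoid trapezoid_bounds)
  have "continuous_on {0..} (\<lambda>t. LINT x|mu t. f x)"
    using f(1) compact_support_trapezoid[OF assms(2)] unfolding f_def by (rule vaguely_continuous)
  then obtain h where h: "0 < h"
    "\<And>t. t \<in> {0..} \<Longrightarrow> dist t t1 < h \<Longrightarrow> dist (LINT x|mu t. f x) (LINT x|mu t1. f x) < e"
    using assms(1,3) unfolding continuous_on_iff by (metis atLeast_iff)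
  have "(LINT x|mu t1. f x) \<le> measure (mu t1) {..<Y}"
    using assms f unfolding f_def by (intro integral_le_measure trapezoid_le_indicator) auto
  moreover have "measure (mu t) {a..b} \<le> (LINT x|mu t. f x)" if "0 \<le> t" for t
    using that f assms(2) indicator_le_trapezoid[of b Y "a - 1"] unfolding f_def
    by (intro measure_le_integral) auto
  ultimately show ?thesis
    using h by (intro that[of h]) (fastforce simp: dist_real_def)+
qed

lemma measure_behind_barrier:
  assumes step: "smooth_step S s" and y: "smooth1 y" and t1: "0 < t1" and \<epsilon>: "0 < \<epsilon>"
    and lower: "\<And>t x. 0 \<le> t \<Longrightarrow> t < t1 \<Longrightarrow> v \<le> u t x"
    and upper: "\<And>t x. 0 \<le> t \<Longrightarrow> t < t1 \<Longrightarrow> y t - \<epsilon> < x \<Longrightarrow> x < y t \<Longrightarrow> u t x \<le> deriv y t"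
    and Y: "y t1 < Y"
  shows "measure (mu 0) {..<y 0 - \<epsilon>} \<le> measure (mu t1) {..<Y}"
proof -
  define Y1 where "Y1 = (y t1 + Y) / 2"
  have Y1: "y t1 < Y1" "Y1 < Y"
    using Y by (auto simp: Y1_def)
  obtain h1 where h1: "0 < h1" "\<And>t. dist t t1 < h1 \<Longrightarrow> dist (y t) (y t1) < Y1 - y t1"
    using smooth1_continuous_on[OF y, of UNIV] Y1(1) unfolding continuous_on_iff
    by (metis UNIV_I diff_gt_0_iff_gt)
  have "measure (mu 0) {-R..<y 0 - \<epsilon>} \<le> measure (mu t1) {..<Y} + e" if "0 < e" for R e
  proof -
    obtain h0 where h0: "0 < h0" "\<And>t. 0 \<le> t \<Longrightarrow> dist t t1 < h0 \<Longrightarrow>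
        measure (mu t) {min v 0 * t1 - R - 1..Y1} \<le> measure (mu t1) {..<Y} + e"
      using mass_near_time_le[of t1 Y1 Y e] t1 Y1(2) \<open>0 < e\<close> by auto
    define h where "h = min (min h0 h1) t1"
    have near: "dist t t1 < h0" "dist t t1 < h1" if "t1 - h < t" "t < t1" for t
      using that by (auto simp: h_def dist_real_def)
    interpret barrier_test mu u S s y t1 h \<epsilon> "min v 0" R Y1 "measure (mu t1) {..<Y} + e"
    proof (intro barrier_test.intro barrier_test_axioms.intro continuity_eq_solution_axioms step)
      show "0 < h" "h \<le> t1" "smooth1 y" "0 < t1" "0 < \<epsilon>" "min v 0 \<le> 0"
        using h0 h1 y t1 \<epsilon> by (auto simp: h_def)
      show "y t \<le> Y1" if "t1 - h < t" "t < t1" for t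
        using h1(2)[of t] near[OF that] by (auto simp: dist_real_def abs_less_iff)
      show "measure (mu t) {min v 0 * t1 - R - 1..Y1} \<le> measure (mu t1) {..<Y} + e"
        if "0 \<le> t" "t1 - h < t" "t < t1" for t
        using h0(2) near that by blast
      show "min v 0 \<le> u t x" if "0 \<le> t" "t < t1" for t x
        using lower[OF that, of x] by simp
      show "u t x \<le> deriv y t" if "0 \<le> t" "t < t1" "y t - \<epsilon> < x" "x < y t" for t x
        using upper[OF that] .
    qed
    show ?thesis
      by (rule measure_initial_le)
  qed
  then have "measure (mu 0) {..<y 0 - \<epsilon>} \<le> measure (mu t1) {..<Y} + e" if "0 < e" for e
    using that by (intro measure_lessThan_le_bound[OF finite_mu sets_mu]) auto
  then show ?thesis
    by (rule field_le_epsilon)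
qed

end

section \<open>The Hoelder barrier\<close>

text \<open>The natural barrier \<open>z + b t + 2/3 A t\<^sup>3\<^sup>/\<^sup>2\<close>, with speed \<open>b + A \<surd>t\<close>, is not smooth at \<open>t = 0\<close>.
  Replacing \<open>\<surd>t\<close> by its tangent at \<open>t\<^sub>1\<close>, which dominates it by concavity, gives a quadratic
  that reaches \<open>z + b t\<^sub>1 + 3/4 A t\<^sub>1\<^sup>3\<^sup>/\<^sup>2\<close> at time \<open>t\<^sub>1\<close>.\<close>
definition barrier :: "real \<Rightarrow> real \<Rightarrow> real \<Rightarrow> real \<Rightarrow> real \<Rightarrow> real" where
  "barrier z b A t1 t = z + b * t + A * (t\<^sup>2 / (4 * sqrt t1) + sqrt t1 / 2 * t)"

lemma smooth1_barrier: "smooth1 (barrier z b A t1)"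
proof -
  have "smooth1 (\<lambda>t. seval (SAdd (SConst z) (SAdd (SMult (SConst b) SSpace)
      (SMult (SConst A) (SAdd (SMult (SConst (1 / (4 * sqrt t1))) (SMult SSpace SSpace))
        (SMult (SConst (sqrt t1 / 2)) SSpace))))) (0, t))"
    by (intro smooth1_seval_space) simp
  then show ?thesis
    by (simp add: barrier_def[abs_def] power2_eq_square add.assoc)
qed

lemma deriv_barrier:
  assumes "0 < t1"
  shows "deriv (barrier z b A t1) t = b + A * (t / (2 * sqrt t1) + sqrt t1 / 2)"
  unfolding barrier_def[abs_def] using assms
  by (intro DERIV_imp_deriv) (auto intro!: derivative_eq_intros simp: field_simps)

lemma barrier_final:
  assumes "0 < t1"
  shows "barrier z b A t1 t1 = z + b * t1 + 3/4 * A * t1 powr (3/2)"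
proof -
  have "t1 powr (3/2) = t1 * sqrt t1"
    using assms powr_add[of t1 1 "1/2"] by (simp add: powr_half_sqrt)
  moreover have "t1\<^sup>2 / (4 * sqrt t1) = t1 * sqrt t1 / 4"
    using assms by (simp add: field_simps power2_eq_square)
  ultimately show ?thesis
    by (simp add: barrier_def algebra_simps) (simp add: times_divide_eq_right[symmetric])
qed

lemma sqrt_le_tangent:
  assumes "0 < t1" "0 \<le> t"
  shows "sqrt t \<le> t / (2 * sqrt t1) + sqrt t1 / 2"
proof -
  have "2 * sqrt t1 * sqrt t \<le> t + sqrt t1 * sqrt t1"
    using sum_squares_bound[of "sqrt t1" "sqrt t"] assms by (simp add: power2_eq_square algebra_simps)
  then show ?thesis
    using assms by (simp add: field_simps)
qed

lemma barrier_displacement: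
  assumes "0 \<le> A" "0 < t1" "0 \<le> t" "t \<le> t1"
  shows "\<bar>barrier z b A t1 t - z\<bar> \<le> \<bar>b\<bar> * t + 3/4 * A * sqrt t1 * t"
proof -
  define q where "q = t\<^sup>2 / (4 * sqrt t1) + sqrt t1 / 2 * t"
  have "t\<^sup>2 / (4 * sqrt t1) \<le> sqrt t1 / 4 * t"
    using assms mult_right_mono[of t t1 t] by (simp add: field_simps power2_eq_square)
  then have "0 \<le> q" "q \<le> 3/4 * sqrt t1 * t"
    using assms by (auto simp: q_def algebra_simps)
  then have "0 \<le> A * q" "A * q \<le> A * (3/4 * sqrt t1 * t)"
    using assms(1) by (simp, intro mult_left_mono)
  moreover have "\<bar>b * t\<bar> \<le> \<bar>b\<bar> * t"
    using assms by (simp add: abs_mult)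
  moreover have "barrier z b A t1 t - z = b * t + A * q"
    by (simp add: barrier_def q_def)
  moreover have "A * (3/4 * sqrt t1 * t) = 3/4 * A * sqrt t1 * t"
    by simp
  ultimately show ?thesis
    using abs_triangle_ineq[of "b * t" "A * q"] by linarith
qed

text \<open>The gain \<open>A\<close> solves \<open>D (2 + U + 3/4 A \<surd>T)\<^sup>1\<^sup>/\<^sup>2 \<le> A\<close>: in the band of a barrier with gain \<open>A\<close>,
  \<open>t + |x - x\<^sub>0| \<le> 2\<delta> + (2 + U + 3/4 A \<surd>T) t\<close>, so the Hoelder estimate from \<open>(0, x\<^sub>0)\<close> bounds
  the flow speed there by the barrier speed again.\<close>
definition hoelder_gain :: "real \<Rightarrow> real \<Rightarrow> real \<Rightarrow> real" where
  "hoelder_gain D T U = D * (3/4 * D * sqrt T + sqrt (2 + U))"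

lemma hoelder_gain_nonneg: "0 \<le> D \<Longrightarrow> 0 \<le> T \<Longrightarrow> 0 \<le> U \<Longrightarrow> 0 \<le> hoelder_gain D T U"
  by (simp add: hoelder_gain_def)

lemma hoelder_gain_bound:
  assumes "0 \<le> D" "0 \<le> T" "0 \<le> U"
  shows "D * sqrt (2 + U + 3/4 * hoelder_gain D T U * sqrt T) \<le> hoelder_gain D T U"
proof -
  define a where "a = 3/4 * D * sqrt T"
  define q where "q = a + sqrt (2 + U)"
  have "2 + U + 3/4 * hoelder_gain D T U * sqrt T = 2 + U + a * q"
    by (simp add: hoelder_gain_def a_def q_def)
  also have "\<dots> \<le> q\<^sup>2"
    using assms by (simp add: q_def a_def power2_eq_square algebra_simps)
  finally have "sqrt (2 + U + 3/4 * hoelder_gain D T U * sqrt T) \<le> q"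
    using assms by (intro real_le_lsqrt) (auto simp: q_def a_def)
  then show ?thesis
    using assms(1) by (simp add: hoelder_gain_def a_def q_def mult_left_mono)
qed

lemma speed_below_barrier:
  fixes u :: "real \<Rightarrow> real \<Rightarrow> real" and x0 \<delta> D T U t1 :: real
  defines "y \<equiv> barrier (x0 + \<delta>) (u 0 x0 + D * sqrt (2 * \<delta>)) (hoelder_gain D T U) t1"
  assumes hold: "\<And>t x z. t \<in> {0..T} \<Longrightarrow> \<bar>u t x - u 0 z\<bar> \<le> D * sqrt (t + \<bar>x - z\<bar>)"
    and U: "\<And>x. \<bar>u 0 x\<bar> \<le> U" and D: "0 < D" and t1: "0 < t1" "t1 \<le> T"
    and \<delta>: "0 < \<delta>" "D * sqrt (2 * \<delta>) \<le> 1"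
    and t: "0 \<le> t" "t \<le> t1" and x: "y t - \<delta> / 2 < x" "x < y t"
  shows "u t x \<le> deriv y t"
proof -
  define A where "A = hoelder_gain D T U"
  define c where "c = D * sqrt (2 * \<delta>)"
  define K where "K = 2 + U + 3/4 * A * sqrt T"
  have U0: "0 \<le> U"
    using U[of 0] by linarith
  have A: "0 \<le> A"
    using D t1 U0 by (simp add: A_def hoelder_gain_nonneg)
  have "0 \<le> c" "c \<le> 1"
    using \<delta> D by (auto simp: c_def)
  then have "\<bar>u 0 x0 + c\<bar> \<le> U + 1"
    using U[of x0] by (simp add: abs_le_iff)
  then have "\<bar>u 0 x0 + c\<bar> * t \<le> (U + 1) * t"
    using t by (simp add: mult_right_mono)
  moreover have "3/4 * A * sqrt t1 * t \<le> 3/4 * A * sqrt T * t"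
    using A t t1 by (intro mult_right_mono mult_left_mono) auto
  moreover have "\<bar>y t - (x0 + \<delta>)\<bar> \<le> \<bar>u 0 x0 + c\<bar> * t + 3/4 * A * sqrt t1 * t"
    unfolding y_def A_def c_def using A t t1 by (intro barrier_displacement) (auto simp: A_def)
  ultimately have "t + \<bar>x - x0\<bar> \<le> 2 * \<delta> + K * t"
    using x \<delta> by (simp add: K_def algebra_simps abs_le_iff)
  then have "sqrt (t + \<bar>x - x0\<bar>) \<le> sqrt (2 * \<delta> + K * t)"
    by simp
  also have "\<dots> \<le> sqrt (2 * \<delta>) + sqrt (K * t)"
    using \<delta> t A U0 t1 by (intro sqrt_add_le_add_sqrt) (auto simp: K_def)
  finally have "sqrt (t + \<bar>x - x0\<bar>) \<le> sqrt (2 * \<delta>) + sqrt K * sqrt t"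
    by (simp add: real_sqrt_mult)
  then have "D * sqrt (t + \<bar>x - x0\<bar>) \<le> c + D * sqrt K * sqrt t"
    using D by (auto simp: c_def algebra_simps dest: mult_left_mono[of _ _ D])
  also have "D * sqrt K * sqrt t \<le> A * (t / (2 * sqrt t1) + sqrt t1 / 2)"
    using hoelder_gain_bound[of D T U] sqrt_le_tangent[OF t1(1) t(1)] D t t1 U0 A
    by (intro mult_mono) (auto simp: K_def A_def)
  finally have "u t x \<le> u 0 x0 + c + A * (t / (2 * sqrt t1) + sqrt t1 / 2)"
    using hold[of t x x0] t t1 by (simp add: abs_le_iff)
  then show ?thesis
    using t1 by (simp add: y_def deriv_barrier A_def c_def)
qed

lemma small_offset_exists:
  assumes "0 < gap"
  obtains \<delta> :: real where "0 < \<delta>" "\<delta> + D * sqrt (2 * \<delta>) * t1 < gap" "D * sqrt (2 * \<delta>) < 1"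
proof -
  have "((\<lambda>\<delta>. \<delta> + D * sqrt (2 * \<delta>) * t1) \<longlongrightarrow> 0) (at_right 0)"
    "((\<lambda>\<delta>. D * sqrt (2 * \<delta>)) \<longlongrightarrow> 0) (at_right 0)"
    by (auto intro!: tendsto_eq_intros)
  then have "\<forall>\<^sub>F \<delta> in at_right 0. 0 < \<delta> \<and> \<delta> + D * sqrt (2 * \<delta>) * t1 < gap \<and> D * sqrt (2 * \<delta>) < 1"
    using assms by (intro eventually_conj eventually_at_right_less order_tendstoD(2)) auto
  then show ?thesis
    using that eventually_happens'[OF trivial_limit_at_right_real] by blast
qed

lemma (in continuity_eq_solution) Fplus_transport_estimate:
  assumes step: "smooth_step S s"
    and hold: "\<And>t x z. t \<in> {0..T} \<Longrightarrow> \<bar>u t x - u 0 z\<bar> \<le> D * sqrt (t + \<bar>x - z\<bar>)"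
    and U: "\<And>x. \<bar>u 0 x\<bar> \<le> U" and D: "0 < D" and t1: "0 < t1" "t1 \<le> T"
    and p: "x0 + u 0 x0 * t1 + 3/4 * hoelder_gain D T U * t1 powr (3/2) \<le> p"
  shows "Fplus mu 0 x0 \<le> Fplus mu t1 p"
proof (rule le_Fplus)
  show "sets (mu t1) = sets borel" "finite_measure (mu t1)"
    using t1 by (simp_all add: sets_mu finite_mu)
  fix w
  assume "p < w"
  obtain \<delta> where \<delta>: "0 < \<delta>" "\<delta> + D * sqrt (2 * \<delta>) * t1 < w - p" "D * sqrt (2 * \<delta>) < 1"
    using small_offset_exists[of "w - p"] \<open>p < w\<close> by auto
  define y where "y = barrier (x0 + \<delta>) (u 0 x0 + D * sqrt (2 * \<delta>)) (hoelder_gain D T U) t1"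
  have "measure (mu 0) {..<y 0 - \<delta> / 2} \<le> measure (mu t1) {..<w}"
  proof (rule measure_behind_barrier[OF step, where v="- (U + D * sqrt T)"])
    show "smooth1 y"
      by (simp add: y_def smooth1_barrier)
    show "- (U + D * sqrt T) \<le> u t x" if "0 \<le> t" "t < t1" for t x
    proof -
      have "\<bar>u t x - u 0 x\<bar> \<le> D * sqrt T"
        using hold[of t x x] that t1 D by (auto intro: order_trans mult_left_mono)
      then show ?thesis
        using U[of x] by (simp add: abs_le_iff)
    qed
    show "u t x \<le> deriv y t" if "0 \<le> t" "t < t1" "y t - \<delta> / 2 < x" "x < y t" for t x
      using speed_below_barrier[OF hold U D t1 \<delta>(1) less_imp_le[OF \<delta>(3)]] that unfolding y_def by auto
    have "y t1 = x0 + u 0 x0 * t1 + 3/4 * hoelder_gain D T U * t1 powr (3/2) + (\<delta> + D * sqrt (2 * \<delta>) * t1)"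
      using t1 by (simp add: y_def barrier_final algebra_simps)
    then show "y t1 < w"
      using p \<delta>(2) by linarith
  qed (use \<delta> t1 in simp_all)
  moreover have "Fplus mu 0 x0 \<le> Fmu mu 0 (y 0 - \<delta> / 2)"
    using \<delta>(1) by (intro Fplus_le_Fmu sets_mu finite_mu) (auto simp: y_def barrier_def)
  ultimately show "Fplus mu 0 x0 \<le> Fmu mu t1 w"
    by (simp add: Fmu_def)
qed

lemma HS_weak_cons_sol_initial_bounded:
  assumes "cutoff psi" "HS_weak_cons_sol psi u mu" "0 \<le> D"
    and hold: "\<And>x z. \<bar>u 0 x - u 0 z\<bar> \<le> D * sqrt \<bar>x - z\<bar>"
  shows "\<bar>u 0 x\<bar> \<le> (SUP x. \<bar>u 0 x\<bar>)"
proof -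
  have "\<bar>u 0 x - u 0 z\<bar> \<le> D" if "\<bar>x - z\<bar> \<le> 1" for x z
  proof -
    have "D * sqrt \<bar>x - z\<bar> \<le> D"
      using that \<open>0 \<le> D\<close> mult_left_mono[of "sqrt \<bar>x - z\<bar>" 1 D] by simp
    then show ?thesis
      using hold[of x z] by simp
  qed
  then have "bdd_above (range (\<lambda>x. \<bar>u 0 x\<bar>))"
    using HS_weak_cons_sol_E2[OF assms(2), of 0] by (intro E2_bounded[OF assms(1)]) auto
  then show ?thesis
    by (rule cSUP_upper[OF UNIV_I])
qed

lemma HS_weak_cons_sol_Fplus_estimate:
  assumes "cutoff psi" "smooth_step S S'" "HS_weak_cons_sol psi u mu" "0 < T" "0 < D"
    and holder: "\<forall>t\<in>{0..T}. \<forall>s\<in>{0..T}. \<forall>x y. \<bar>u t x - u s y\<bar> \<le> D * (\<bar>t - s\<bar> + \<bar>x - y\<bar>) powr (1/2)"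
    and t: "t \<in> {0..T}" and M: "3/4 * hoelder_gain D T (SUP x. \<bar>u 0 x\<bar>) \<le> M"
  shows "Fplus mu 0 x0 \<le> Fplus mu t (x0 + u 0 x0 * t + M * t powr (3/2))"
proof (cases "t = 0")
  case False
  interpret continuity_eq_solution mu u
    using assms(3) by (rule HS_weak_cons_sol_continuity_eq)
  have hold: "\<bar>u t x - u 0 z\<bar> \<le> D * sqrt (t + \<bar>x - z\<bar>)" if "t \<in> {0..T}" for t x z
    using holder[rule_format, of t 0 x z] that \<open>0 < T\<close> by (simp add: powr_half_sqrt)
  have U: "\<bar>u 0 x\<bar> \<le> (SUP x. \<bar>u 0 x\<bar>)" for x
    using hold[of 0] \<open>0 < T\<close>
    by (intro HS_weak_cons_sol_initial_bounded[OF assms(1,3) less_imp_le[OF \<open>0 < D\<close>]]) simp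
  show ?thesis
    using t False \<open>0 < D\<close> M
    by (intro Fplus_transport_estimate[OF assms(2) hold U]) (auto intro: mult_right_mono)
qed simp

theorem lemma3p3:
  fixes psi :: "real \<Rightarrow> real"
  assumes "cutoff psi"
  shows "\<exists>Mf :: real \<Rightarrow> real \<Rightarrow> real \<Rightarrow> real. (\<forall>a b c. 0 < Mf a b c) \<and>
    (\<forall>u mu T D. HS_weak_cons_sol psi u mu \<and> T > 0 \<and> D > 0 \<and>
       (\<forall>t\<in>{0..T}. \<forall>s\<in>{0..T}. \<forall>x y. \<bar>u t x - u s y\<bar> \<le> D * (\<bar>t - s\<bar> + \<bar>x - y\<bar>) powr (1/2))
     \<longrightarrow> (\<forall>X :: real \<Rightarrow> real.
            (\<forall>t\<in>{0..T}. (X has_real_derivative u t (X t)) (at t within {0..T}))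
          \<longrightarrow> (\<forall>t\<in>{0..T}. Fplus mu 0 (X 0)
                 \<le> Fplus mu t (X 0 + u 0 (X 0) * t + Mf D T (SUP x. \<bar>u 0 x\<bar>) * t powr (3/2)))))"
proof -
  obtain S S' where step: "smooth_step S S'"
    using cutoff_smooth_step[OF assms] .
  define Mf where "Mf D T U = 3/4 * hoelder_gain \<bar>D\<bar> \<bar>T\<bar> \<bar>U\<bar> + 1" for D T U :: real
  have "0 < Mf D T U" for D T U
    unfolding Mf_def using hoelder_gain_nonneg[of "\<bar>D\<bar>" "\<bar>T\<bar>" "\<bar>U\<bar>"] by simp
  moreover have "3/4 * hoelder_gain D T U \<le> Mf D T U" if "0 < D" "0 < T" for D T U
  proof -
    have "hoelder_gain D T U \<le> hoelder_gain D T \<bar>U\<bar>"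
      using that by (auto simp: hoelder_gain_def intro!: mult_left_mono)
    then show ?thesis
      using that by (simp add: Mf_def)
  qed
  ultimately show ?thesis
    using HS_weak_cons_sol_Fplus_estimate[OF assms step] by blast
qed

end
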